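(* Let $G$ and $H$ be graphs with $i_G$ and $i_H$ isolated vertices, respectively. Then $$\rho_o(G\boxtimes H)\geq\rho(G^-)\rho(H^-)+i_G\rho_o(H)+i_H\rho_o(G)-i_Gi_H$$ and $$\rho_o(G\boxtimes H)\leq \min\{\rho(G^-)\gamma_f(H^-),\ \rho(H^-)\gamma_f(G^-)\}+i_G\rho_o(H)+i_H\rho_o(G)-i_Gi_H.$$
   Context: All graphs are finite and simple. $G^-$ denotes the graph obtained from $G$ by deleting all isolated vertices. A packing of $G$ is a set $P\subseteq V(G)$ with $N[u]\cap N[v]=\emptyset$ for all distinct $u,v\in P$ ($N[\cdot]$ the closed neighborhood); $\rho(G)$ is the maximum size of a packing. An open packing is a set whose vertices have pairwise disjoint open neighborhoods; $\rho_o(G)$ is its maximum size. The fractional domination number $\gamma_f(G)$ is the minimum of $\sum_{v\in V(G)} f(v)$ over all functions $f:V(G)\to[0,1]$ with $\sum_{u\in N[v]}f(u)\ge 1$ for every $v\in V(G)$ (taken to be $0$ for the empty graph). The strong product $G\boxtimes H$ has vertex set $V(G)\times V(H)$, where distinct $(g,h),(g',h')$ are adjacent iff ($g=g'$ or $gg'\in E(G)$) and ($h=h'$ or $hh'\in E(H)$). *)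

theory Defs
  imports Complex_Main
begin

definition graph :: "'a set \<Rightarrow> ('a \<Rightarrow> 'a \<Rightarrow> bool) \<Rightarrow> bool" where
  "graph V E \<longleftrightarrow> finite V \<and> (\<forall>u v. E u v \<longrightarrow> u \<in> V \<and> v \<in> V)
     \<and> (\<forall>u v. E u v \<longrightarrow> E v u) \<and> (\<forall>v. \<not> E v v)"

definition nbhd :: "'a set \<Rightarrow> ('a \<Rightarrow> 'a \<Rightarrow> bool) \<Rightarrow> 'a \<Rightarrow> 'a set" where
  "nbhd V E v = {u \<in> V. E v u}"

definition cnbhd :: "'a set \<Rightarrow> ('a \<Rightarrow> 'a \<Rightarrow> bool) \<Rightarrow> 'a \<Rightarrow> 'a set" where
  "cnbhd V E v = insert v (nbhd V E v)"

definition packing :: "'a set \<Rightarrow> ('a \<Rightarrow> 'a \<Rightarrow> bool) \<Rightarrow> 'a set \<Rightarrow> bool" where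
  "packing V E P \<longleftrightarrow> P \<subseteq> V \<and>
     (\<forall>u\<in>P. \<forall>v\<in>P. u \<noteq> v \<longrightarrow> cnbhd V E u \<inter> cnbhd V E v = {})"

definition open_packing :: "'a set \<Rightarrow> ('a \<Rightarrow> 'a \<Rightarrow> bool) \<Rightarrow> 'a set \<Rightarrow> bool" where
  "open_packing V E P \<longleftrightarrow> P \<subseteq> V \<and>
     (\<forall>u\<in>P. \<forall>v\<in>P. u \<noteq> v \<longrightarrow> nbhd V E u \<inter> nbhd V E v = {})"

definition packing_number :: "'a set \<Rightarrow> ('a \<Rightarrow> 'a \<Rightarrow> bool) \<Rightarrow> nat" where
  "packing_number V E = Max (card ` {P. packing V E P})"

definition open_packing_number :: "'a set \<Rightarrow> ('a \<Rightarrow> 'a \<Rightarrow> bool) \<Rightarrow> nat" where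
  "open_packing_number V E = Max (card ` {P. open_packing V E P})"

text \<open>Fractional domination number (infimum = minimum of the LP; 0 for the empty graph).\<close>
definition frac_dom :: "'a set \<Rightarrow> ('a \<Rightarrow> 'a \<Rightarrow> bool) \<Rightarrow> real" where
  "frac_dom V E = Inf ((\<lambda>f. \<Sum>v\<in>V. f v) `
     {f :: 'a \<Rightarrow> real. (\<forall>v\<in>V. 0 \<le> f v \<and> f v \<le> 1) \<and>
                        (\<forall>v\<in>V. (\<Sum>u\<in>cnbhd V E v. f u) \<ge> 1)})"

definition isolated :: "'a set \<Rightarrow> ('a \<Rightarrow> 'a \<Rightarrow> bool) \<Rightarrow> 'a set" where
  "isolated V E = {v \<in> V. nbhd V E v = {}}"

definition del_iso_V :: "'a set \<Rightarrow> ('a \<Rightarrow> 'a \<Rightarrow> bool) \<Rightarrow> 'a set" where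
  "del_iso_V V E = V - isolated V E"

definition del_iso_E :: "'a set \<Rightarrow> ('a \<Rightarrow> 'a \<Rightarrow> bool) \<Rightarrow> 'a \<Rightarrow> 'a \<Rightarrow> bool" where
  "del_iso_E V E u v \<longleftrightarrow> E u v \<and> u \<in> del_iso_V V E \<and> v \<in> del_iso_V V E"

definition strong_V :: "'a set \<Rightarrow> 'b set \<Rightarrow> ('a \<times> 'b) set" where
  "strong_V VG VH = VG \<times> VH"

definition strong_E :: "'a set \<Rightarrow> ('a \<Rightarrow> 'a \<Rightarrow> bool) \<Rightarrow> 'b set \<Rightarrow> ('b \<Rightarrow> 'b \<Rightarrow> bool)
    \<Rightarrow> 'a \<times> 'b \<Rightarrow> 'a \<times> 'b \<Rightarrow> bool" where
  "strong_E VG EG VH EH x y \<longleftrightarrow>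
     x \<in> VG \<times> VH \<and> y \<in> VG \<times> VH \<and> x \<noteq> y \<and>
     (fst x = fst y \<or> EG (fst x) (fst y)) \<and> (snd x = snd y \<or> EH (snd x) (snd y))"

end

theory Submission
  imports Defs
begin

(* Lower bound: for maximum packings P, Q of G^-, H^- and maximum open packings O_G, O_H of G, H,
   the set P \<times> Q \<union> I_G \<times> O_H \<union> O_G \<times> I_H is an open packing of G \<boxtimes> H,
   because an isolated coordinate collapses the closed neighbourhood in that factor to a point;
   the last two products overlap only inside I_G \<times> I_H.

   Upper bound: split a maximum open packing S of G \<boxtimes> H by isolated coordinates.  The part
   inside V(G^-) \<times> V(H^-) is an open packing of G^- \<boxtimes> H^-, and in a strong product of
   isolate-free graphs every open packing is a packing.  In a packing of G \<boxtimes> H, the vertices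
   whose second coordinate is in N[y] for a fixed y project injectively onto a packing of G;
   weighting by a fractional dominating function of H gives the bound \<rho>(G) \<gamma>_f(H).
   The fibres of S are open packings of the other factor, and over an isolated vertex of G the
   isolated vertices of H can be added to the fibre. *)

lemma finite_packings: "finite V \<Longrightarrow> finite {P. packing V E P}"
  by (rule finite_subset[of _ "Pow V"]) (auto simp: packing_def)

lemma finite_open_packings: "finite V \<Longrightarrow> finite {P. open_packing V E P}"
  by (rule finite_subset[of _ "Pow V"]) (auto simp: open_packing_def)

lemma card_le_packing_number:
  "finite V \<Longrightarrow> packing V E P \<Longrightarrow> card P \<le> packing_number V E"
  unfolding packing_number_def by (auto intro: Max_ge finite_packings)

lemma card_le_open_packing_number:
  "finite V \<Longrightarrow> open_packing V E P \<Longrightarrow> card P \<le> open_packing_number V E"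
  unfolding open_packing_number_def by (auto intro: Max_ge finite_open_packings)

lemma packing_number_attained:
  assumes "finite V"
  obtains P where "packing V E P" "card P = packing_number V E"
proof -
  have "packing_number V E \<in> card ` {P. packing V E P}"
    unfolding packing_number_def
    by (rule Max_in[OF finite_imageI[OF finite_packings[OF assms]]]) (auto simp: packing_def)
  with that show ?thesis by auto
qed

lemma open_packing_number_attained:
  assumes "finite V"
  obtains P where "open_packing V E P" "card P = open_packing_number V E"
proof -
  have "open_packing_number V E \<in> card ` {P. open_packing V E P}"
    unfolding open_packing_number_def
    by (rule Max_in[OF finite_imageI[OF finite_open_packings[OF assms]]])
      (auto simp: open_packing_def)
  with that show ?thesis by auto
qed

lemma cnbhd_subset: "v \<in> V \<Longrightarrow> cnbhd V E v \<subseteq> V"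
  unfolding cnbhd_def nbhd_def by auto

lemma self_in_cnbhd: "v \<in> cnbhd V E v"
  unfolding cnbhd_def by simp

lemma cnbhd_sym: "graph V E \<Longrightarrow> u \<in> cnbhd V E v \<longleftrightarrow> v \<in> cnbhd V E u"
  unfolding graph_def cnbhd_def nbhd_def by auto

lemma cnbhd_isolated: "g \<in> isolated V E \<Longrightarrow> cnbhd V E g = {g}"
  unfolding isolated_def cnbhd_def by simp

lemma mem_cnbhd_isolated: "graph V E \<Longrightarrow> g \<in> isolated V E \<Longrightarrow> g \<in> cnbhd V E v \<Longrightarrow> v = g"
  using cnbhd_sym cnbhd_isolated by fastforce

lemma cnbhd_disjoint_isolated:
  assumes "graph V E" "g \<in> isolated V E" "v \<notin> isolated V E"
  shows "cnbhd V E v \<inter> cnbhd V E g = {}"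
  using assms mem_cnbhd_isolated[OF assms(1,2), of v] by (auto simp: cnbhd_isolated)

lemma open_packing_subset: "open_packing V E A \<Longrightarrow> B \<subseteq> A \<Longrightarrow> open_packing V E B"
  unfolding open_packing_def by blast

lemma open_packing_Un:
  assumes "open_packing V E A" "open_packing V E B"
    and "\<And>a b. a \<in> A \<Longrightarrow> b \<in> B \<Longrightarrow> nbhd V E a \<inter> nbhd V E b = {}"
  shows "open_packing V E (A \<union> B)"
  using assms unfolding open_packing_def by (metis Int_commute Un_iff Un_subset_iff)

lemma open_packing_Un_isolated: "open_packing V E P \<Longrightarrow> open_packing V E (P \<union> isolated V E)"
  unfolding open_packing_def isolated_def by auto

lemma packing_imp_open_packing: "packing V E P \<Longrightarrow> open_packing V E P"
  unfolding packing_def open_packing_def cnbhd_def by blast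

lemma open_packing_subgraph:
  assumes "open_packing V E S" "S \<subseteq> V'" "V' \<subseteq> V" "\<And>u v. E' u v \<Longrightarrow> E u v"
  shows "open_packing V' E' S"
proof -
  have "nbhd V' E' v \<subseteq> nbhd V E v" for v
    using assms(3,4) unfolding nbhd_def by auto
  with assms(1,2) show ?thesis unfolding open_packing_def by blast
qed

lemma card_le_card_mult_fibre:
  assumes "finite A" "finite B" "S \<subseteq> A \<times> B" "\<And>a. a \<in> A \<Longrightarrow> card {b. (a, b) \<in> S} \<le> k"
  shows "card S \<le> card A * k"
proof -
  have "S = Sigma A (\<lambda>a. {b. (a, b) \<in> S})"
    using assms(3) by auto
  moreover have "finite {b. (a, b) \<in> S}" for a
    using assms(2,3) by (auto intro: finite_subset)
  ultimately have "card S = (\<Sum>a\<in>A. card {b. (a, b) \<in> S})"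
    using assms(1) by (metis card_SigmaI)
  also have "\<dots> \<le> card A * k"
    using assms(4) sum_bounded_above[of A "\<lambda>a. card {b. (a, b) \<in> S}" k] by simp
  finally show ?thesis .
qed

lemma graph_del_iso: "graph V E \<Longrightarrow> graph (del_iso_V V E) (del_iso_E V E)"
  unfolding graph_def del_iso_E_def del_iso_V_def by auto

lemma isolated_del_iso: "graph V E \<Longrightarrow> isolated (del_iso_V V E) (del_iso_E V E) = {}"
  unfolding graph_def isolated_def del_iso_V_def del_iso_E_def nbhd_def by blast

lemma cnbhd_del_iso:
  assumes "graph V E" "v \<in> del_iso_V V E"
  shows "cnbhd (del_iso_V V E) (del_iso_E V E) v = cnbhd V E v"
  using assms unfolding graph_def cnbhd_def nbhd_def del_iso_E_def del_iso_V_def isolated_def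
  by blast

lemma packing_del_iso:
  assumes "graph V E" "packing (del_iso_V V E) (del_iso_E V E) P"
  shows "packing V E P"
proof -
  have P: "P \<subseteq> del_iso_V V E"
    using assms(2) unfolding packing_def by blast
  then have "P \<subseteq> V"
    unfolding del_iso_V_def by blast
  moreover have "cnbhd V E u = cnbhd (del_iso_V V E) (del_iso_E V E) u" if "u \<in> P" for u
    using P that cnbhd_del_iso[OF assms(1)] by auto
  ultimately show ?thesis
    using assms(2) unfolding packing_def by simp
qed

lemma nbhd_strong:
  assumes "p \<in> VG \<times> VH"
  shows "nbhd (strong_V VG VH) (strong_E VG EG VH EH) p
           = cnbhd VG EG (fst p) \<times> cnbhd VH EH (snd p) - {p}"
  using assms cnbhd_subset[of "fst p" VG EG] cnbhd_subset[of "snd p" VH EH]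
  unfolding nbhd_def strong_V_def strong_E_def cnbhd_def by auto

lemma cnbhd_strong:
  assumes "p \<in> VG \<times> VH"
  shows "cnbhd (strong_V VG VH) (strong_E VG EG VH EH) p
           = cnbhd VG EG (fst p) \<times> cnbhd VH EH (snd p)"
  using nbhd_strong[OF assms] self_in_cnbhd[of "fst p"] self_in_cnbhd[of "snd p"]
  unfolding cnbhd_def[of "strong_V VG VH"] by (cases p) auto

lemma nbhd_strong_swap:
  "nbhd (strong_V VH VG) (strong_E VH EH VG EG) (prod.swap p)
     = prod.swap ` nbhd (strong_V VG VH) (strong_E VG EG VH EH) p"
  unfolding nbhd_def strong_V_def strong_E_def by (cases p) auto

lemma open_packing_strong_swap:
  fixes VG :: "'a set" and VH :: "'b set"
  shows "open_packing (strong_V VH VG) (strong_E VH EH VG EG) (prod.swap ` S)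
     \<longleftrightarrow> open_packing (strong_V VG VH) (strong_E VG EG VH EH) S"
proof -
  have sub: "prod.swap ` S \<subseteq> strong_V VH VG \<longleftrightarrow> S \<subseteq> strong_V VG VH"
    by (auto simp: strong_V_def)
  have disj: "prod.swap ` A \<inter> prod.swap ` B = {} \<longleftrightarrow> A \<inter> B = {}" for A B :: "('a \<times> 'b) set"
    by (simp add: image_Int[symmetric])
  show ?thesis
    unfolding open_packing_def by (simp add: sub nbhd_strong_swap disj inj_eq)
qed

lemma open_packing_number_strong_swap:
  fixes VG :: "'a set" and VH :: "'b set"
  shows "open_packing_number (strong_V VH VG) (strong_E VH EH VG EG)
           = open_packing_number (strong_V VG VH) (strong_E VG EG VH EH)"
proof -
  have swap_swap_image: "prod.swap ` prod.swap ` P = P" for P :: "('b \<times> 'a) set"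
    by (simp add: image_image)
  have "{P. open_packing (strong_V VH VG) (strong_E VH EH VG EG) P}
          = (`) prod.swap ` {S. open_packing (strong_V VG VH) (strong_E VG EG VH EH) S}"
  proof (intro set_eqI iffI)
    fix P assume "P \<in> {P. open_packing (strong_V VH VG) (strong_E VH EH VG EG) P}"
    then have "prod.swap ` P \<in> {S. open_packing (strong_V VG VH) (strong_E VG EG VH EH) S}"
      using open_packing_strong_swap[where VG = VG and VH = VH and S = "prod.swap ` P"]
      by (simp add: swap_swap_image)
    then show "P \<in> (`) prod.swap ` {S. open_packing (strong_V VG VH) (strong_E VG EG VH EH) S}"
      by (metis image_eqI swap_swap_image)
  qed (auto simp: open_packing_strong_swap)
  then show ?thesis
    unfolding open_packing_number_def by (simp add: image_image card_image)
qed

lemma packing_strong_times: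
  assumes "packing VG EG P" "packing VH EH Q"
  shows "packing (strong_V VG VH) (strong_E VG EG VH EH) (P \<times> Q)"
  unfolding packing_def
proof (intro conjI ballI impI)
  have PQ: "P \<times> Q \<subseteq> VG \<times> VH"
    using assms unfolding packing_def by auto
  then show "P \<times> Q \<subseteq> strong_V VG VH"
    unfolding strong_V_def .
  fix p q assume p: "p \<in> P \<times> Q" and q: "q \<in> P \<times> Q" and "p \<noteq> q"
  then have "fst p \<noteq> fst q \<or> snd p \<noteq> snd q"
    by (cases p, cases q) auto
  moreover have "fst p \<in> P" "fst q \<in> P" "snd p \<in> Q" "snd q \<in> Q"
    using p q by auto
  ultimately have "cnbhd VG EG (fst p) \<inter> cnbhd VG EG (fst q) = {}
             \<or> cnbhd VH EH (snd p) \<inter> cnbhd VH EH (snd q) = {}"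
    using assms unfolding packing_def by blast
  with p q PQ show "cnbhd (strong_V VG VH) (strong_E VG EG VH EH) p
      \<inter> cnbhd (strong_V VG VH) (strong_E VG EG VH EH) q = {}"
    by (auto simp: cnbhd_strong subset_iff)
qed

lemma open_packing_strong_isolated_times:
  assumes "I \<subseteq> isolated VG EG" "open_packing VH EH Q"
  shows "open_packing (strong_V VG VH) (strong_E VG EG VH EH) (I \<times> Q)"
  unfolding open_packing_def
proof (intro conjI ballI impI)
  have IQ: "I \<times> Q \<subseteq> VG \<times> VH"
    using assms unfolding isolated_def open_packing_def by auto
  then show "I \<times> Q \<subseteq> strong_V VG VH"
    unfolding strong_V_def .
  have nb: "nbhd (strong_V VG VH) (strong_E VG EG VH EH) (g, h) \<subseteq> {g} \<times> nbhd VH EH h"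
    if "(g, h) \<in> I \<times> Q" for g h
  proof -
    have "cnbhd VG EG g = {g}"
      using that assms(1) by (intro cnbhd_isolated) auto
    with that IQ show ?thesis
      by (auto simp: nbhd_strong cnbhd_def subset_iff)
  qed
  fix p q assume "p \<in> I \<times> Q" "q \<in> I \<times> Q" "p \<noteq> q"
  then obtain g h g' h' where "p = (g, h)" "q = (g', h')"
    and "(g, h) \<in> I \<times> Q" "(g', h') \<in> I \<times> Q" "g = g' \<longrightarrow> h \<noteq> h'"
    by (cases p, cases q) auto
  moreover have "g = g' \<longrightarrow> nbhd VH EH h \<inter> nbhd VH EH h' = {}"
    using assms(2) calculation unfolding open_packing_def by blast
  ultimately show "nbhd (strong_V VG VH) (strong_E VG EG VH EH) p
      \<inter> nbhd (strong_V VG VH) (strong_E VG EG VH EH) q = {}"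
    using nb by blast
qed

lemma nbhd_strong_disjointI:
  assumes "p \<in> VG \<times> VH" "q \<in> VG \<times> VH"
    and "cnbhd VG EG (fst p) \<inter> cnbhd VG EG (fst q) = {}
         \<or> cnbhd VH EH (snd p) \<inter> cnbhd VH EH (snd q) = {}"
  shows "nbhd (strong_V VG VH) (strong_E VG EG VH EH) p
           \<inter> nbhd (strong_V VG VH) (strong_E VG EG VH EH) q = {}"
  using assms by (auto simp: nbhd_strong)

lemma nbhd_strong_isolated_disjoint:
  assumes "graph VG EG" "graph VH EH" "g \<in> isolated VG EG" "h' \<in> isolated VH EH"
    and "(g, h) \<in> VG \<times> VH" "(g', h') \<in> VG \<times> VH"
  shows "nbhd (strong_V VG VH) (strong_E VG EG VH EH) (g, h)
           \<inter> nbhd (strong_V VG VH) (strong_E VG EG VH EH) (g', h') = {}"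
  using assms mem_cnbhd_isolated[OF assms(1,3)] mem_cnbhd_isolated[OF assms(2,4)]
  by (auto simp: nbhd_strong cnbhd_isolated)

lemma open_packing_strong_Times_Un:
  assumes G: "graph VG EG" and H: "graph VH EH"
    and P: "packing VG EG P" "P \<inter> isolated VG EG = {}"
    and Q: "packing VH EH Q" "Q \<inter> isolated VH EH = {}"
    and OG: "open_packing VG EG OG" and OH: "open_packing VH EH OH"
  shows "open_packing (strong_V VG VH) (strong_E VG EG VH EH)
           (P \<times> Q \<union> (isolated VG EG \<times> OH \<union> OG \<times> isolated VH EH))"
proof (intro open_packing_Un)
  show "open_packing (strong_V VG VH) (strong_E VG EG VH EH) (P \<times> Q)"
    using P(1) Q(1) by (intro packing_imp_open_packing packing_strong_times)
  show "open_packing (strong_V VG VH) (strong_E VG EG VH EH) (isolated VG EG \<times> OH)"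
    using OH by (intro open_packing_strong_isolated_times) auto
  have "open_packing (strong_V VH VG) (strong_E VH EH VG EG) (isolated VH EH \<times> OG)"
    using OG by (intro open_packing_strong_isolated_times) auto
  then show "open_packing (strong_V VG VH) (strong_E VG EG VH EH) (OG \<times> isolated VH EH)"
    using open_packing_strong_swap[where VG = VH and VH = VG and S = "isolated VH EH \<times> OG"]
    by (simp add: product_swap)
  have PQV: "P \<subseteq> VG" "Q \<subseteq> VH" "OG \<subseteq> VG" "OH \<subseteq> VH"
    using P(1) Q(1) OG OH unfolding packing_def open_packing_def by auto
  have IV: "isolated VG EG \<subseteq> VG" "isolated VH EH \<subseteq> VH"
    unfolding isolated_def by auto
  show "nbhd (strong_V VG VH) (strong_E VG EG VH EH) a
          \<inter> nbhd (strong_V VG VH) (strong_E VG EG VH EH) b = {}"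
    if "a \<in> isolated VG EG \<times> OH" "b \<in> OG \<times> isolated VH EH" for a b
    using that PQV IV
    by (cases a, cases b) (clarsimp, rule nbhd_strong_isolated_disjoint[OF G H]; auto)
  show "nbhd (strong_V VG VH) (strong_E VG EG VH EH) a
          \<inter> nbhd (strong_V VG VH) (strong_E VG EG VH EH) b = {}"
    if "a \<in> P \<times> Q" "b \<in> isolated VG EG \<times> OH \<union> OG \<times> isolated VH EH" for a b
  proof (rule nbhd_strong_disjointI)
    show "a \<in> VG \<times> VH" "b \<in> VG \<times> VH"
      using that PQV IV by auto
    have "fst a \<notin> isolated VG EG" "snd a \<notin> isolated VH EH"
      "fst b \<in> isolated VG EG \<or> snd b \<in> isolated VH EH"
      using that P(2) Q(2) by auto
    then show "cnbhd VG EG (fst a) \<inter> cnbhd VG EG (fst b) = {}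
        \<or> cnbhd VH EH (snd a) \<inter> cnbhd VH EH (snd b) = {}"
      using cnbhd_disjoint_isolated[OF G, of "fst b" "fst a"]
        cnbhd_disjoint_isolated[OF H, of "snd b" "snd a"] by blast
  qed
qed

lemma card_Times_Un_Times_ge:
  assumes "finite P" "finite Q" "finite IG" "finite IH" "finite OG" "finite OH"
    and "P \<inter> IG = {}" "Q \<inter> IH = {}"
  shows "card P * card Q + card IG * card OH + card OG * card IH
           \<le> card (P \<times> Q \<union> (IG \<times> OH \<union> OG \<times> IH)) + card IG * card IH"
proof -
  have "card (P \<times> Q \<union> (IG \<times> OH \<union> OG \<times> IH)) = card P * card Q + card (IG \<times> OH \<union> OG \<times> IH)"
    using assms by (subst card_Un_disjoint) (auto simp: card_cartesian_product)
  moreover have "card (IG \<times> OH \<union> OG \<times> IH) + card (IG \<times> OH \<inter> OG \<times> IH)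
                   = card IG * card OH + card OG * card IH"
    using assms card_Un_Int[of "IG \<times> OH" "OG \<times> IH"] by (simp add: card_cartesian_product)
  moreover have "card (IG \<times> OH \<inter> OG \<times> IH) \<le> card (IG \<times> IH)"
    using assms by (intro card_mono) auto
  ultimately show ?thesis
    by (simp add: card_cartesian_product)
qed

lemma open_packing_number_strong_ge:
  fixes VG :: "'a set" and VH :: "'b set"
  assumes G: "graph VG EG" and H: "graph VH EH"
  defines "IG \<equiv> isolated VG EG" and "IH \<equiv> isolated VH EH"
  shows "real (packing_number (del_iso_V VG EG) (del_iso_E VG EG))
           * real (packing_number (del_iso_V VH EH) (del_iso_E VH EH))
         + real (card IG) * real (open_packing_number VH EH)
         + real (card IH) * real (open_packing_number VG EG)
         - real (card IG) * real (card IH)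
         \<le> real (open_packing_number (strong_V VG VH) (strong_E VG EG VH EH))"
proof -
  have fin: "finite VG" "finite VH"
    using G H unfolding graph_def by auto
  then have "finite (del_iso_V VG EG)" "finite (del_iso_V VH EH)"
    unfolding del_iso_V_def by auto
  then obtain P Q where
      P: "packing (del_iso_V VG EG) (del_iso_E VG EG) P"
         "card P = packing_number (del_iso_V VG EG) (del_iso_E VG EG)"
    and Q: "packing (del_iso_V VH EH) (del_iso_E VH EH) Q"
         "card Q = packing_number (del_iso_V VH EH) (del_iso_E VH EH)"
    using packing_number_attained by metis
  obtain OG OH where
      OG: "open_packing VG EG OG" "card OG = open_packing_number VG EG"
    and OH: "open_packing VH EH OH" "card OH = open_packing_number VH EH"
    using open_packing_number_attained fin by metis
  have "P \<subseteq> VG - IG" "Q \<subseteq> VH - IH" "IG \<subseteq> VG" "IH \<subseteq> VH" "OG \<subseteq> VG" "OH \<subseteq> VH"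
    using P(1) Q(1) OG(1) OH(1)
    unfolding packing_def open_packing_def del_iso_V_def IG_def IH_def isolated_def by auto
  then have "card P * card Q + card IG * card OH + card OG * card IH
               \<le> card (P \<times> Q \<union> (IG \<times> OH \<union> OG \<times> IH)) + card IG * card IH"
    using fin by (intro card_Times_Un_Times_ge) (auto dest: finite_subset)
  also have "card (P \<times> Q \<union> (IG \<times> OH \<union> OG \<times> IH))
               \<le> open_packing_number (strong_V VG VH) (strong_E VG EG VH EH)"
    using fin open_packing_strong_Times_Un[OF G H packing_del_iso[OF G P(1)] _
        packing_del_iso[OF H Q(1)] _ OG(1) OH(1)] \<open>P \<subseteq> VG - IG\<close> \<open>Q \<subseteq> VH - IH\<close>
    unfolding IG_def IH_def
    by (intro card_le_open_packing_number) (auto simp: strong_V_def)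
  finally show ?thesis
    using P(2) Q(2) OG(2) OH(2)
    by (simp add: of_nat_mono algebra_simps flip: of_nat_mult of_nat_add)
qed

lemma cnbhd_Int_has_two_elements:
  assumes "graph V E" "isolated V E = {}" "u \<in> V" "u \<in> cnbhd V E v"
  shows "\<exists>a\<in>cnbhd V E u \<inter> cnbhd V E v. \<exists>a'\<in>cnbhd V E u \<inter> cnbhd V E v. a \<noteq> a'"
proof (cases "u = v")
  case True
  from assms(2,3) obtain w where "w \<in> nbhd V E u"
    unfolding isolated_def by blast
  moreover from this assms(1) have "w \<noteq> u"
    unfolding nbhd_def graph_def by blast
  ultimately show ?thesis
    using True by (auto simp: cnbhd_def)
next
  case False
  have "v \<in> cnbhd V E u"
    using assms(4) by (rule cnbhd_sym[OF assms(1), THEN iffD1])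
  then have "u \<in> cnbhd V E u \<inter> cnbhd V E v" "v \<in> cnbhd V E u \<inter> cnbhd V E v"
    using assms(4) self_in_cnbhd by auto
  with False show ?thesis
    by blast
qed

lemma open_packing_strong_imp_packing:
  assumes G: "graph VG EG" and H: "graph VH EH"
    and "isolated VG EG = {}" "isolated VH EH = {}"
    and S: "open_packing (strong_V VG VH) (strong_E VG EG VH EH) S"
  shows "packing (strong_V VG VH) (strong_E VG EG VH EH) S"
  unfolding packing_def
proof (intro conjI ballI impI)
  show SV: "S \<subseteq> strong_V VG VH"
    using S unfolding open_packing_def by blast
  fix p q assume "p \<in> S" "q \<in> S" "p \<noteq> q"
  define A where "A = cnbhd VG EG (fst p) \<inter> cnbhd VG EG (fst q)"
  define B where "B = cnbhd VH EH (snd p) \<inter> cnbhd VH EH (snd q)"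
  have pq: "p \<in> VG \<times> VH" "q \<in> VG \<times> VH"
    using SV \<open>p \<in> S\<close> \<open>q \<in> S\<close> by (auto simp: strong_V_def)
  have "nbhd (strong_V VG VH) (strong_E VG EG VH EH) p
          \<inter> nbhd (strong_V VG VH) (strong_E VG EG VH EH) q = {}"
    using S \<open>p \<in> S\<close> \<open>q \<in> S\<close> \<open>p \<noteq> q\<close> unfolding open_packing_def by blast
  then have AB: "A \<times> B \<subseteq> {p, q}"
    using pq unfolding A_def B_def by (auto simp: nbhd_strong)
  show "cnbhd (strong_V VG VH) (strong_E VG EG VH EH) p
          \<inter> cnbhd (strong_V VG VH) (strong_E VG EG VH EH) q = {}"
  proof (rule ccontr)
    assume "cnbhd (strong_V VG VH) (strong_E VG EG VH EH) p
              \<inter> cnbhd (strong_V VG VH) (strong_E VG EG VH EH) q \<noteq> {}"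
    then obtain x y where "x \<in> A" "y \<in> B"
      using pq unfolding A_def B_def by (auto simp: cnbhd_strong)
    with AB have "(x, y) = p \<or> (x, y) = q"
      by blast
    with \<open>x \<in> A\<close> \<open>y \<in> B\<close> have "fst p \<in> cnbhd VG EG (fst q)" "snd p \<in> cnbhd VH EH (snd q)"
      unfolding A_def B_def using cnbhd_sym[OF G] cnbhd_sym[OF H] by auto
    \<comment> \<open>so A and B have two elements each, and A \<times> B \<subseteq> {p, q} would contain three points\<close>
    then obtain a a' b b' where "a \<in> A" "a' \<in> A" "a \<noteq> a'" "b \<in> B" "b' \<in> B" "b \<noteq> b'"
      using cnbhd_Int_has_two_elements[OF G] cnbhd_Int_has_two_elements[OF H] pq assms(3,4)
      unfolding A_def B_def by (metis mem_Times_iff)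
    then have "(a, b) \<in> {p, q}" "(a', b) \<in> {p, q}" "(a, b') \<in> {p, q}"
      using AB by auto
    with \<open>a \<noteq> a'\<close> \<open>b \<noteq> b'\<close> show False
      by auto
  qed
qed

lemma card_packing_strong_fibre_le:
  assumes "finite VG" and S: "packing (strong_V VG VH) (strong_E VG EG VH EH) S"
  shows "card {p \<in> S. h \<in> cnbhd VH EH (snd p)} \<le> packing_number VG EG"
proof -
  define T where "T = {p \<in> S. h \<in> cnbhd VH EH (snd p)}"
  have SV: "S \<subseteq> VG \<times> VH"
    using S unfolding packing_def strong_V_def by blast
  have disj: "cnbhd VG EG (fst p) \<inter> cnbhd VG EG (fst q) = {}"
    if "p \<in> T" "q \<in> T" "p \<noteq> q" for p q
  proof -
    have "cnbhd (strong_V VG VH) (strong_E VG EG VH EH) p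
            \<inter> cnbhd (strong_V VG VH) (strong_E VG EG VH EH) q = {}"
      using S that unfolding packing_def T_def by blast
    moreover have "p \<in> VG \<times> VH" "q \<in> VG \<times> VH" "h \<in> cnbhd VH EH (snd p) \<inter> cnbhd VH EH (snd q)"
      using that SV unfolding T_def by auto
    ultimately show ?thesis
      by (auto simp: cnbhd_strong Times_Int_Times)
  qed
  have "inj_on fst T"
    using disj self_in_cnbhd by (fastforce intro: inj_onI)
  moreover have "packing VG EG (fst ` T)"
    unfolding packing_def
  proof (intro conjI ballI impI)
    show "fst ` T \<subseteq> VG"
      using SV unfolding T_def by auto
    fix u v assume "u \<in> fst ` T" "v \<in> fst ` T" "u \<noteq> v"
    then obtain p q where "p \<in> T" "q \<in> T" "u = fst p" "v = fst q" "p \<noteq> q"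
      by blast
    then show "cnbhd VG EG u \<inter> cnbhd VG EG v = {}"
      using disj by blast
  qed
  ultimately have "card T \<le> packing_number VG EG"
    using card_le_packing_number[OF assms(1)] card_image by metis
  then show ?thesis
    unfolding T_def .
qed

definition frac_dominating :: "'a set \<Rightarrow> ('a \<Rightarrow> 'a \<Rightarrow> bool) \<Rightarrow> ('a \<Rightarrow> real) \<Rightarrow> bool" where
  "frac_dominating V E f \<longleftrightarrow>
     (\<forall>v\<in>V. 0 \<le> f v \<and> f v \<le> 1) \<and> (\<forall>v\<in>V. (\<Sum>u\<in>cnbhd V E v. f u) \<ge> 1)"

lemma frac_dom_eq_Inf:
  "frac_dom V E = Inf ((\<lambda>f. \<Sum>v\<in>V. f v) ` {f. frac_dominating V E f})"
  unfolding frac_dom_def frac_dominating_def ..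

lemma frac_dominating_one: "finite V \<Longrightarrow> frac_dominating V E (\<lambda>_. 1)"
  unfolding frac_dominating_def
  by (auto simp: Suc_le_eq card_gt_0_iff cnbhd_def nbhd_def)

lemma le_mult_frac_dom:
  assumes "finite V" "0 \<le> a" "\<And>f. frac_dominating V E f \<Longrightarrow> c \<le> a * (\<Sum>v\<in>V. f v)"
  shows "c \<le> a * frac_dom V E"
proof (cases "a = 0")
  case True
  then show ?thesis
    using assms(3)[OF frac_dominating_one[OF assms(1)]] by simp
next
  case False
  with assms(2) have "a > 0"
    by simp
  have "c / a \<le> frac_dom V E"
    unfolding frac_dom_eq_Inf
  proof (rule cInf_greatest)
    show "(\<lambda>f. \<Sum>v\<in>V. f v) ` {f. frac_dominating V E f} \<noteq> {}"
      using frac_dominating_one[OF assms(1)] by blast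
  qed (use assms(3) \<open>a > 0\<close> in \<open>auto simp: divide_le_eq mult.commute\<close>)
  with \<open>a > 0\<close> show ?thesis
    by (simp add: divide_le_eq mult.commute)
qed

lemma card_packing_strong_le_sum:
  assumes fin: "finite VG" "finite VH"
    and S: "packing (strong_V VG VH) (strong_E VG EG VH EH) S"
    and f: "frac_dominating VH EH f"
  shows "real (card S) \<le> real (packing_number VG EG) * (\<Sum>v\<in>VH. f v)"
proof -
  have SV: "S \<subseteq> VG \<times> VH"
    using S unfolding packing_def strong_V_def by blast
  then have "finite S"
    using fin by (auto dest: finite_subset)
  have cnbhd_eq: "{u \<in> VH. u \<in> cnbhd VH EH (snd p)} = cnbhd VH EH (snd p)" if "p \<in> S" for p
  proof -
    have "snd p \<in> VH"
      using that SV by auto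
    then show ?thesis
      using cnbhd_subset[of "snd p" VH EH] by auto
  qed
  have "real (card S) = (\<Sum>p\<in>S. 1)"
    by simp
  also have "\<dots> \<le> (\<Sum>p\<in>S. \<Sum>u\<in>cnbhd VH EH (snd p). f u)"
    using f SV by (intro sum_mono) (auto simp: frac_dominating_def)
  also have "\<dots> = (\<Sum>p\<in>S. \<Sum>u\<in>{u \<in> VH. u \<in> cnbhd VH EH (snd p)}. f u)"
    by (simp add: cnbhd_eq)
  also have "\<dots> = (\<Sum>u\<in>VH. \<Sum>p\<in>{p \<in> S. u \<in> cnbhd VH EH (snd p)}. f u)"
    using \<open>finite S\<close> fin(2) by (rule sum.swap_restrict)
  also have "\<dots> = (\<Sum>u\<in>VH. f u * real (card {p \<in> S. u \<in> cnbhd VH EH (snd p)}))"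
    by (simp add: mult.commute)
  also have "\<dots> \<le> (\<Sum>u\<in>VH. f u * real (packing_number VG EG))"
    using f card_packing_strong_fibre_le[OF fin(1) S]
    by (intro sum_mono mult_left_mono) (auto simp: frac_dominating_def)
  also have "\<dots> = real (packing_number VG EG) * (\<Sum>v\<in>VH. f v)"
    by (simp add: sum_distrib_right mult.commute)
  finally show ?thesis .
qed

lemma card_packing_strong_le:
  assumes "finite VG" "finite VH"
    and "packing (strong_V VG VH) (strong_E VG EG VH EH) S"
  shows "real (card S) \<le> real (packing_number VG EG) * frac_dom VH EH"
  using assms by (intro le_mult_frac_dom card_packing_strong_le_sum) auto

lemma open_packing_strong_fibre:
  assumes "graph VH EH" and S: "open_packing (strong_V VG VH) (strong_E VG EG VH EH) S"
  shows "open_packing VH EH {h. (g, h) \<in> S}"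
  unfolding open_packing_def
proof (intro conjI ballI impI)
  show "{h. (g, h) \<in> S} \<subseteq> VH"
    using S unfolding open_packing_def strong_V_def by blast
  fix h h' assume h: "h \<in> {h. (g, h) \<in> S}" and h': "h' \<in> {h. (g, h) \<in> S}" and "h \<noteq> h'"
  have gh: "(g, h) \<in> VG \<times> VH" "(g, h') \<in> VG \<times> VH"
    using S h h' unfolding open_packing_def strong_V_def by blast+
  have "nbhd VH EH k \<subseteq> cnbhd VH EH k - {k}" for k
    using assms(1) unfolding graph_def cnbhd_def nbhd_def by auto
  then have "{g} \<times> nbhd VH EH k \<subseteq> nbhd (strong_V VG VH) (strong_E VG EG VH EH) (g, k)"
    if "(g, k) \<in> VG \<times> VH" for k
    using that by (auto simp: nbhd_strong self_in_cnbhd)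
  moreover have "nbhd (strong_V VG VH) (strong_E VG EG VH EH) (g, h)
                   \<inter> nbhd (strong_V VG VH) (strong_E VG EG VH EH) (g, h') = {}"
    using S h h' \<open>h \<noteq> h'\<close> unfolding open_packing_def by blast
  ultimately show "nbhd VH EH h \<inter> nbhd VH EH h' = {}"
    using gh by blast
qed

lemma card_open_packing_strong_del_iso_le:
  assumes G: "graph VG EG" and H: "graph VH EH"
    and S: "open_packing (strong_V VG VH) (strong_E VG EG VH EH) S"
  shows "real (card (S \<inter> (del_iso_V VG EG \<times> del_iso_V VH EH)))
           \<le> real (packing_number (del_iso_V VG EG) (del_iso_E VG EG))
               * frac_dom (del_iso_V VH EH) (del_iso_E VH EH)"
proof (rule card_packing_strong_le)
  show "finite (del_iso_V VG EG)" "finite (del_iso_V VH EH)"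
    using G H unfolding graph_def del_iso_V_def by auto
  have "open_packing (strong_V (del_iso_V VG EG) (del_iso_V VH EH))
          (strong_E (del_iso_V VG EG) (del_iso_E VG EG) (del_iso_V VH EH) (del_iso_E VH EH))
          (S \<inter> (del_iso_V VG EG \<times> del_iso_V VH EH))"
    using S by (rule open_packing_subgraph[OF open_packing_subset])
      (auto simp: strong_V_def strong_E_def del_iso_V_def del_iso_E_def)
  then show "packing (strong_V (del_iso_V VG EG) (del_iso_V VH EH))
          (strong_E (del_iso_V VG EG) (del_iso_E VG EG) (del_iso_V VH EH) (del_iso_E VH EH))
          (S \<inter> (del_iso_V VG EG \<times> del_iso_V VH EH))"
    using G H by (intro open_packing_strong_imp_packing graph_del_iso isolated_del_iso)
qed

lemma card_open_packing_strong_Times_le: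
  fixes VG :: "'a set" and VH :: "'b set"
  assumes G: "graph VG EG" and "finite VH" "I \<subseteq> VH"
    and S: "open_packing (strong_V VG VH) (strong_E VG EG VH EH) S"
  shows "card (S \<inter> (VG \<times> I)) \<le> card I * open_packing_number VG EG"
proof -
  have fin: "finite VG"
    using G unfolding graph_def by blast
  have "open_packing (strong_V VH VG) (strong_E VH EH VG EG) (prod.swap ` S)"
    using S by (simp add: open_packing_strong_swap)
  then have "open_packing VG EG {g. (h, g) \<in> prod.swap ` (S \<inter> (VG \<times> I))}" for h
    by (rule open_packing_subset[OF open_packing_strong_fibre[OF G]]) auto
  then have fibre: "card {g. (h, g) \<in> prod.swap ` (S \<inter> (VG \<times> I))} \<le> open_packing_number VG EG"
    for h
    using fin by (rule card_le_open_packing_number[rotated])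
  have "prod.swap ` (S \<inter> (VG \<times> I)) \<subseteq> I \<times> VG"
    by auto
  then have "card (prod.swap ` (S \<inter> (VG \<times> I))) \<le> card I * open_packing_number VG EG"
    by (rule card_le_card_mult_fibre[OF finite_subset[OF assms(3,2)] fin]) (rule fibre)
  then show ?thesis
    by (simp add: card_image)
qed

lemma card_open_packing_strong_isolated_Times_le:
  assumes H: "graph VH EH" and "finite VG" "I \<subseteq> VG"
    and S: "open_packing (strong_V VG VH) (strong_E VG EG VH EH) S"
  shows "card (S \<inter> (I \<times> del_iso_V VH EH))
           \<le> card I * (open_packing_number VH EH - card (isolated VH EH))"
proof (rule card_le_card_mult_fibre)
  have fin: "finite VH"
    using H unfolding graph_def by blast
  fix g
  let ?F = "{h. (g, h) \<in> S \<inter> (I \<times> del_iso_V VH EH)}"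
  have "open_packing VH EH (?F \<union> isolated VH EH)"
    using open_packing_Un_isolated[OF open_packing_strong_fibre[OF H S, of g]]
    by (rule open_packing_subset) auto
  then have "card (?F \<union> isolated VH EH) \<le> open_packing_number VH EH"
    using fin by (rule card_le_open_packing_number[rotated])
  moreover have "finite ?F" "finite (isolated VH EH)" "?F \<inter> isolated VH EH = {}"
    using fin by (auto simp: del_iso_V_def isolated_def intro: finite_subset)
  ultimately show "card ?F \<le> open_packing_number VH EH - card (isolated VH EH)"
    by (simp add: card_Un_disjoint)
qed (use assms in \<open>auto simp: del_iso_V_def graph_def dest: finite_subset\<close>)

lemma open_packing_number_strong_le:
  fixes VG :: "'a set" and VH :: "'b set"
  assumes G: "graph VG EG" and H: "graph VH EH"
  defines "IG \<equiv> isolated VG EG" and "IH \<equiv> isolated VH EH"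
  shows "real (open_packing_number (strong_V VG VH) (strong_E VG EG VH EH))
         \<le> real (packing_number (del_iso_V VG EG) (del_iso_E VG EG))
             * frac_dom (del_iso_V VH EH) (del_iso_E VH EH)
           + real (card IG) * real (open_packing_number VH EH)
           + real (card IH) * real (open_packing_number VG EG)
           - real (card IG) * real (card IH)"
proof -
  have fin: "finite VG" "finite VH"
    using G H unfolding graph_def by auto
  then obtain S where S: "open_packing (strong_V VG VH) (strong_E VG EG VH EH) S"
      "card S = open_packing_number (strong_V VG VH) (strong_E VG EG VH EH)"
    using open_packing_number_attained[of "strong_V VG VH"] by (auto simp: strong_V_def)
  have IV: "IG \<subseteq> VG" "IH \<subseteq> VH"
    unfolding IG_def IH_def isolated_def by auto
  define SA where "SA = S \<inter> (del_iso_V VG EG \<times> del_iso_V VH EH)"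
  define SX where "SX = S \<inter> (VG \<times> IH)"
  define SY where "SY = S \<inter> (IG \<times> del_iso_V VH EH)"
  have "S \<subseteq> VG \<times> VH"
    using S(1) unfolding open_packing_def strong_V_def by blast
  then have "S = SA \<union> SX \<union> SY" "SA \<inter> SX = {}" "(SA \<union> SX) \<inter> SY = {}"
    and "finite SA" "finite SX" "finite SY"
    using fin unfolding SA_def SX_def SY_def
    by (auto simp: del_iso_V_def IG_def IH_def dest: finite_subset)
  then have "card S = card SA + card SX + card SY"
    by (metis card_Un_disjoint finite_UnI)
  moreover have "card IH \<le> open_packing_number VH EH"
    using open_packing_Un_isolated[of VH EH "{}"] fin(2)
    by (intro card_le_open_packing_number) (auto simp: IH_def open_packing_def)
  then have "card SY + card IG * card IH \<le> card IG * open_packing_number VH EH"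
    using card_open_packing_strong_isolated_Times_le[OF H fin(1) IV(1) S(1)]
    unfolding SY_def IH_def diff_mult_distrib2 by (metis le_diff_conv2 mult_le_mono2)
  ultimately show ?thesis
    using S(2) card_open_packing_strong_del_iso_le[OF G H S(1), folded SA_def]
      card_open_packing_strong_Times_le[OF G fin(2) IV(2) S(1), folded SX_def]
    by (simp add: algebra_simps flip: of_nat_mult of_nat_add of_nat_le_iff)
qed

theorem mainTheorem11:
  fixes VG :: "'a set" and EG :: "'a \<Rightarrow> 'a \<Rightarrow> bool"
    and VH :: "'b set" and EH :: "'b \<Rightarrow> 'b \<Rightarrow> bool"
  assumes "graph VG EG" and "graph VH EH"
  defines "iG \<equiv> real (card (isolated VG EG))"
      and "iH \<equiv> real (card (isolated VH EH))"
  shows "(real (open_packing_number (strong_V VG VH) (strong_E VG EG VH EH)) \<ge>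
           real (packing_number (del_iso_V VG EG) (del_iso_E VG EG))
             * real (packing_number (del_iso_V VH EH) (del_iso_E VH EH))
           + iG * real (open_packing_number VH EH) + iH * real (open_packing_number VG EG)
           - iG * iH) \<and>
         (real (open_packing_number (strong_V VG VH) (strong_E VG EG VH EH)) \<le>
           min (real (packing_number (del_iso_V VG EG) (del_iso_E VG EG))
                  * frac_dom (del_iso_V VH EH) (del_iso_E VH EH))
               (real (packing_number (del_iso_V VH EH) (del_iso_E VH EH))
                  * frac_dom (del_iso_V VG EG) (del_iso_E VG EG))
           + iG * real (open_packing_number VH EH) + iH * real (open_packing_number VG EG)
           - iG * iH)"
proof -
  note lower = open_packing_number_strong_ge[OF assms(1,2)]
  note upper = open_packing_number_strong_le[OF assms(1,2)]
  \<comment> \<open>instantiated, since as a rewrite rule the swap equation is permutative\<close>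
  note upper_swapped = open_packing_number_strong_le[OF assms(2,1),
      unfolded open_packing_number_strong_swap[where VG = VG and VH = VH]]
  show ?thesis
    unfolding iG_def iH_def min_def using lower upper upper_swapped by (simp add: algebra_simps)
qed

end
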